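(* Let $\mathcal{G}=(V,E_1,\dots,E_\tau)$ be a temporal graph with $E_1=E_2=\dots=E_\tau=:E$, and let $k\in\mathbb{N}_0$ with $\tau\ge k$. Then $(\mathcal{G},k,0)$ is a yes-instance of MinTimeline$_\infty$ (equivalently, of MinTimeline$_+$) if and only if the graph $G=(V,E)$ admits a $(\tau{:}\tau-k)$-coloring.
   Context: A temporal graph $\mathcal{G}=(V,(E_i)_{i\in[\tau]})$ consists of a finite vertex set $V$ and edge sets $E_1,\dots,E_\tau\subseteq\binom{V}{2}$. A $k$-activity timeline is a set $\mathcal{T}\subseteq\{(v,a,b)\in V\times[\tau]\times[\tau]\mid a\le b\}$ with at most $k$ triples $(v,\cdot,\cdot)$ for each $v\in V$; it covers $\mathcal{G}$ if for every $t\in[\tau]$ and $\{u,v\}\in E_t$ there is $(u,a,b)\in\mathcal{T}$ or $(v,a,b)\in\mathcal{T}$ with $a\le t\le b$. MinTimeline$_\infty$: given $(\mathcal{G},k,\ell)$, decide whether there is a $k$-activity timeline covering $\mathcal{G}$ with $\max_{(v,a,b)\in\mathcal{T}}(b-a)\le\ell$; MinTimeline$_+$: same with $\sum_{(v,a,b)\in\mathcal{T}}(b-a)\le\ell$. For a graph $G=(V,E)$ and integers $a\ge b\ge 0$, an $(a{:}b)$-coloring of $G$ is a function $c\colon V\to\binom{[a]}{b}$ (assigning each vertex a $b$-element subset of $[a]$) with $c(u)\cap c(v)=\emptyset$ for all $\{u,v\}\in E$. *)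

theory Defs
  imports Main
begin

definition temporal_graph :: "'v set \<Rightarrow> (nat \<Rightarrow> 'v set set) \<Rightarrow> nat \<Rightarrow> bool" where
  "temporal_graph V Es \<tau> \<longleftrightarrow> finite V \<and>
     (\<forall>t\<in>{1..\<tau>}. \<forall>e\<in>Es t. e \<subseteq> V \<and> card e = 2)"

definition activity_timeline ::
  "'v set \<Rightarrow> nat \<Rightarrow> nat \<Rightarrow> ('v \<times> nat \<times> nat) set \<Rightarrow> bool" where
  "activity_timeline V \<tau> k T \<longleftrightarrow>
     T \<subseteq> {(v, a, b). v \<in> V \<and> a \<in> {1..\<tau>} \<and> b \<in> {1..\<tau>} \<and> a \<le> b} \<and>
     (\<forall>v\<in>V. card {(a, b). (v, a, b) \<in> T} \<le> k)"

definition covers ::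
  "('v \<times> nat \<times> nat) set \<Rightarrow> (nat \<Rightarrow> 'v set set) \<Rightarrow> nat \<Rightarrow> bool" where
  "covers T Es \<tau> \<longleftrightarrow>
     (\<forall>t\<in>{1..\<tau>}. \<forall>u v. {u, v} \<in> Es t \<longrightarrow>
        (\<exists>a b. ((u, a, b) \<in> T \<or> (v, a, b) \<in> T) \<and> a \<le> t \<and> t \<le> b))"

definition MinTimeline_inf :: "'v set \<Rightarrow> (nat \<Rightarrow> 'v set set) \<Rightarrow> nat \<Rightarrow> nat \<Rightarrow> nat \<Rightarrow> bool" where
  "MinTimeline_inf V Es \<tau> k l \<longleftrightarrow>
     (\<exists>T. activity_timeline V \<tau> k T \<and> covers T Es \<tau> \<and>
          (\<forall>(v, a, b)\<in>T. b - a \<le> l))"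

definition MinTimeline_plus :: "'v set \<Rightarrow> (nat \<Rightarrow> 'v set set) \<Rightarrow> nat \<Rightarrow> nat \<Rightarrow> nat \<Rightarrow> bool" where
  "MinTimeline_plus V Es \<tau> k l \<longleftrightarrow>
     (\<exists>T. activity_timeline V \<tau> k T \<and> covers T Es \<tau> \<and>
          (\<Sum>(v, a, b)\<in>T. b - a) \<le> l)"

definition ab_coloring :: "'v set \<Rightarrow> 'v set set \<Rightarrow> nat \<Rightarrow> nat \<Rightarrow> ('v \<Rightarrow> nat set) \<Rightarrow> bool" where
  "ab_coloring V E a b c \<longleftrightarrow>
     (\<forall>v\<in>V. c v \<subseteq> {1..a} \<and> card (c v) = b) \<and>
     (\<forall>u v. {u, v} \<in> E \<longrightarrow> c u \<inter> c v = {})"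

definition has_ab_coloring :: "'v set \<Rightarrow> 'v set set \<Rightarrow> nat \<Rightarrow> nat \<Rightarrow> bool" where
  "has_ab_coloring V E a b \<longleftrightarrow> (\<exists>c. ab_coloring V E a b c)"

end

theory Submission
  imports Defs
begin

text \<open>With \<open>\<ell> = 0\<close> every interval of a timeline is a single time step, so a timeline is
  just a set \<open>A v \<subseteq> [\<tau>]\<close> of at most \<open>k\<close> active steps per vertex. For a static edge set it
  covers every step iff for each edge \<open>{u, v}\<close> the inactive sets \<open>[\<tau>] - A u\<close> and \<open>[\<tau>] - A v\<close>
  are disjoint. These inactive sets have at least \<open>\<tau> - k\<close> elements, so shrinking them gives a
  \<open>(\<tau>:\<tau>-k)\<close>-coloring; conversely the complements of the colour sets form such a timeline.
  For the sum objective nothing changes, since a sum of naturals vanishes iff every summand does.\<close>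

definition point_timeline :: "'v set \<Rightarrow> ('v \<Rightarrow> nat set) \<Rightarrow> ('v \<times> nat \<times> nat) set" where
  "point_timeline V A = {(v, t, t) | v t. v \<in> V \<and> t \<in> A v}"

lemma card_point_timeline_slice:
  assumes "v \<in> V"
  shows "card {(a, b). (v, a, b) \<in> point_timeline V A} = card (A v)"
proof -
  have "{(a, b). (v, a, b) \<in> point_timeline V A} = (\<lambda>t. (t, t)) ` A v"
    using assms by (auto simp: point_timeline_def)
  then show ?thesis by (simp add: card_image inj_on_def)
qed

lemma activity_timeline_point_timeline_iff:
  "activity_timeline V \<tau> k (point_timeline V A) \<longleftrightarrow>
     (\<forall>v\<in>V. A v \<subseteq> {1..\<tau>} \<and> card (A v) \<le> k)"
proof -
  have "point_timeline V A \<subseteq> {(v, a, b). v \<in> V \<and> a \<in> {1..\<tau>} \<and> b \<in> {1..\<tau>} \<and> a \<le> b}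
      \<longleftrightarrow> (\<forall>v\<in>V. A v \<subseteq> {1..\<tau>})"
    unfolding point_timeline_def by blast
  then show ?thesis
    unfolding activity_timeline_def by (simp add: card_point_timeline_slice ball_conj_distrib)
qed

lemma covers_point_timeline_iff:
  "covers (point_timeline V A) Es \<tau> \<longleftrightarrow>
     (\<forall>t\<in>{1..\<tau>}. \<forall>u v. {u, v} \<in> Es t \<longrightarrow> (u \<in> V \<and> t \<in> A u) \<or> (v \<in> V \<and> t \<in> A v))"
  unfolding covers_def point_timeline_def by fastforce

lemma zero_length_timeline_eq_point_timeline:
  assumes "activity_timeline V \<tau> k T" and "\<forall>(v, a, b)\<in>T. b - a \<le> (0::nat)"
  shows "T = point_timeline V (\<lambda>v. {t. (v, t, t) \<in> T})"
  using assms by (fastforce simp: activity_timeline_def point_timeline_def)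

lemma MinTimeline_inf_zero_iff:
  "MinTimeline_inf V Es \<tau> k 0 \<longleftrightarrow>
     (\<exists>A. activity_timeline V \<tau> k (point_timeline V A) \<and> covers (point_timeline V A) Es \<tau>)"
proof
  assume "MinTimeline_inf V Es \<tau> k 0"
  then obtain T where "activity_timeline V \<tau> k T" "covers T Es \<tau>"
    and "\<forall>(v, a, b)\<in>T. b - a \<le> (0::nat)"
    unfolding MinTimeline_inf_def by blast
  moreover from this have "T = point_timeline V (\<lambda>v. {t. (v, t, t) \<in> T})"
    by (intro zero_length_timeline_eq_point_timeline)
  ultimately show "\<exists>A. activity_timeline V \<tau> k (point_timeline V A) \<and> covers (point_timeline V A) Es \<tau>"
    by (intro exI[of _ "\<lambda>v. {t. (v, t, t) \<in> T}"]) simp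
next
  assume "\<exists>A. activity_timeline V \<tau> k (point_timeline V A) \<and> covers (point_timeline V A) Es \<tau>"
  moreover have "\<forall>(v, a, b)\<in>point_timeline V A. b - a \<le> (0::nat)" for A
    by (auto simp: point_timeline_def)
  ultimately show "MinTimeline_inf V Es \<tau> k 0"
    unfolding MinTimeline_inf_def by blast
qed

lemma finite_activity_timeline:
  assumes "finite V" and "activity_timeline V \<tau> k T"
  shows "finite T"
proof (rule finite_subset)
  show "T \<subseteq> V \<times> {1..\<tau>} \<times> {1..\<tau>}"
    using assms(2) by (auto simp: activity_timeline_def)
qed (use assms(1) in simp)

lemma MinTimeline_plus_zero_iff_inf:
  assumes "finite V"
  shows "MinTimeline_plus V Es \<tau> k 0 \<longleftrightarrow> MinTimeline_inf V Es \<tau> k 0"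
proof -
  have "(\<Sum>(v, a, b)\<in>T. b - a) \<le> (0::nat) \<longleftrightarrow> (\<forall>(v, a, b)\<in>T. b - a \<le> (0::nat))"
    if "activity_timeline V \<tau> k T" for T
    using finite_activity_timeline[OF assms that] by (auto simp: case_prod_beta)
  then show ?thesis
    unfolding MinTimeline_plus_def MinTimeline_inf_def by blast
qed

lemma has_ab_coloring_if_static_point_cover:
  assumes static: "\<forall>t\<in>{1..\<tau>}. Es t = E"
    and active: "\<forall>v\<in>V. A v \<subseteq> {1..\<tau>} \<and> card (A v) \<le> k"
    and cover: "\<forall>t\<in>{1..\<tau>}. \<forall>u v. {u, v} \<in> Es t \<longrightarrow> (u \<in> V \<and> t \<in> A u) \<or> (v \<in> V \<and> t \<in> A v)"
  shows "has_ab_coloring V E \<tau> (\<tau> - k)"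
proof -
  \<comment> \<open>Colour outside \<open>V\<close> with \<open>{}\<close>: for \<open>\<tau> = 0\<close> the edges of \<open>E\<close> need not lie in \<open>V\<close>.\<close>
  have "\<exists>S. (v \<in> V \<longrightarrow> S \<subseteq> {1..\<tau>} - A v \<and> card S = \<tau> - k) \<and> (v \<notin> V \<longrightarrow> S = {})" for v
  proof (cases "v \<in> V")
    case True
    then have "A v \<subseteq> {1..\<tau>}"
      using active by blast
    then have "card ({1..\<tau>} - A v) = \<tau> - card (A v)"
      by (simp add: card_Diff_subset finite_subset)
    moreover have "card (A v) \<le> k"
      using active True by blast
    ultimately have "card ({1..\<tau>} - A v) \<ge> \<tau> - k"
      by simp
    then show ?thesis
      using True by (meson obtain_subset_with_card_n)
  qed simp
  then obtain c where c_in_V: "\<And>v. v \<in> V \<Longrightarrow> c v \<subseteq> {1..\<tau>} - A v \<and> card (c v) = \<tau> - k"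
    and c_outside: "\<And>v. v \<notin> V \<Longrightarrow> c v = {}"
    by metis
  have "c u \<inter> c v = {}" if "{u, v} \<in> E" for u v
  proof (rule ccontr)
    assume "c u \<inter> c v \<noteq> {}"
    then obtain t where "t \<in> c u" "t \<in> c v" by blast
    moreover from this have "u \<in> V" "v \<in> V"
      using c_outside by auto
    ultimately have "t \<in> {1..\<tau>}" "t \<notin> A u" "t \<notin> A v"
      using c_in_V by blast+
    moreover from \<open>t \<in> {1..\<tau>}\<close> have "{u, v} \<in> Es t"
      using static that by simp
    ultimately show False
      using cover by blast
  qed
  then have "ab_coloring V E \<tau> (\<tau> - k) c"
    using c_in_V by (auto simp: ab_coloring_def)
  then show ?thesis
    unfolding has_ab_coloring_def by blast
qed

lemma point_timeline_of_ab_coloring: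
  assumes tg: "temporal_graph V Es \<tau>"
    and static: "\<forall>t\<in>{1..\<tau>}. Es t = E"
    and "\<tau> \<ge> k"
    and col: "ab_coloring V E \<tau> (\<tau> - k) c"
  defines "A \<equiv> \<lambda>v. {1..\<tau>} - c v"
  shows "activity_timeline V \<tau> k (point_timeline V A)"
    and "covers (point_timeline V A) Es \<tau>"
proof -
  have "card (A v) \<le> k" if "v \<in> V" for v
  proof -
    have "c v \<subseteq> {1..\<tau>}" "card (c v) = \<tau> - k"
      using col that by (auto simp: ab_coloring_def)
    then show ?thesis
      using \<open>\<tau> \<ge> k\<close> by (simp add: A_def card_Diff_subset finite_subset)
  qed
  then show "activity_timeline V \<tau> k (point_timeline V A)"
    unfolding activity_timeline_point_timeline_iff by (simp add: A_def)
  show "covers (point_timeline V A) Es \<tau>"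
    unfolding covers_point_timeline_iff
  proof (intro ballI allI impI)
    fix t u v assume t: "t \<in> {1..\<tau>}" and uv: "{u, v} \<in> Es t"
    then have "{u, v} \<subseteq> V"
      using tg unfolding temporal_graph_def by blast
    moreover have "c u \<inter> c v = {}"
      using col static t uv unfolding ab_coloring_def by simp
    ultimately show "(u \<in> V \<and> t \<in> A u) \<or> (v \<in> V \<and> t \<in> A v)"
      using t by (auto simp: A_def)
  qed
qed

theorem mainTheorem2:
  fixes V :: "'v set" and Es :: "nat \<Rightarrow> 'v set set" and E :: "'v set set"
    and \<tau> k :: nat
  assumes "temporal_graph V Es \<tau>"
    and "\<forall>t\<in>{1..\<tau>}. Es t = E"
    and "\<tau> \<ge> k"
  shows "(MinTimeline_inf V Es \<tau> k 0 \<longleftrightarrow> has_ab_coloring V E \<tau> (\<tau> - k)) \<and>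
         (MinTimeline_plus V Es \<tau> k 0 \<longleftrightarrow> has_ab_coloring V E \<tau> (\<tau> - k))"
proof -
  have "MinTimeline_inf V Es \<tau> k 0 \<longleftrightarrow> has_ab_coloring V E \<tau> (\<tau> - k)"
  proof
    assume "MinTimeline_inf V Es \<tau> k 0"
    then obtain A where "activity_timeline V \<tau> k (point_timeline V A)"
      and "covers (point_timeline V A) Es \<tau>"
      unfolding MinTimeline_inf_zero_iff by blast
    then show "has_ab_coloring V E \<tau> (\<tau> - k)"
      unfolding activity_timeline_point_timeline_iff covers_point_timeline_iff
      by (rule has_ab_coloring_if_static_point_cover[OF assms(2)])
  next
    assume "has_ab_coloring V E \<tau> (\<tau> - k)"
    then obtain c where "ab_coloring V E \<tau> (\<tau> - k) c"
      unfolding has_ab_coloring_def by blast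
    from point_timeline_of_ab_coloring[OF assms this]
    show "MinTimeline_inf V Es \<tau> k 0"
      unfolding MinTimeline_inf_zero_iff by blast
  qed
  moreover have "finite V"
    using assms(1) by (simp add: temporal_graph_def)
  ultimately show ?thesis
    by (simp add: MinTimeline_plus_zero_iff_inf)
qed

end
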